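(* Let $G=(V,E)$ be an $\alpha$-expander, let $\lambda\in(0,1)$, and let $\mathbf d\in\mathbb Z^V$ be the current discrepancy vector of the expander greedy process on $G$ at some time step $t$. Consider the $(1+\beta)$-process on vertex set $V$ with $\beta=\alpha$ and weights $w_v=\deg_G(v)$ for $v\in V$, started from the same discrepancy vector $\mathbf d$. Then (a) $\Delta_{-1}(\mathbf d)\le\widetilde\Delta_{-1}(\mathbf d)$ and (b) $\Delta_{+1}(\mathbf d)\le\widetilde\Delta_{+1}(\mathbf d)$. Hence the expected one-step change of the potential in the expander greedy process satisfies $\mathbb E[\Phi(\mathbf d^{t+1})-\Phi(\mathbf d)]\le \widetilde\Delta_{-1}(\mathbf d)+\widetilde\Delta_{+1}(\mathbf d)$, where $\mathbf d^{t+1}$ is the discrepancy vector after the next step.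
   Context: $\mathrm{vol}(S)=\sum_{v\in S}\deg(v)$; $G$ is an $\alpha$-expander if for every $S\subseteq V$, $|E(S,V\setminus S)|\ge\alpha\min\{\mathrm{vol}(S),\mathrm{vol}(V\setminus S)\}$. Expander greedy process: discrepancies $d_v$ (in-degree minus out-degree among arrived edges); at each step a uniformly random edge $\{i,j\}\in E$ arrives independently, and if $d_i\ge d_j$ (ties arbitrary) it is oriented $i\to j$, so $d_i$ decreases by $1$ and $d_j$ increases by $1$. Potential: $\Phi(\mathbf d)=\sum_{v\in V}\cosh(\lambda d_v)$. With $i$ the endpoint of the arriving edge of larger discrepancy and $j$ the other: $\Delta_{-1}(\mathbf d)=\mathbb E_{\{i,j\}\sim E}[\cosh(\lambda(d_i-1))-\cosh(\lambda d_i)]$ and $\Delta_{+1}(\mathbf d)=\mathbb E_{\{i,j\}\sim E}[\cosh(\lambda(d_j+1))-\cosh(\lambda d_j)]$. The $(1+\beta)$-process with weights $w\ge 0$: two vertices $u,v$ are sampled independently, each equal to $x\in V$ with probability $w_x/\sum_{y}w_y$, and the vector $\chi_u-\chi_v$ is signed: with probability $1-\beta$ uniformly at random (so each of $u,v$ is equally likely to be the vertex receiving $+1$, the other receiving $-1$), and with probability $\beta$ greedily (the one of $u,v$ with higher discrepancy receives $-1$, the other $+1$). Let $a$ denote the vertex receiving $+1$ and $b$ the vertex receiving $-1$. Then $\widetilde\Delta_{+1}(\mathbf d)=\mathbb E[\cosh(\lambda(d_a+1))-\cosh(\lambda d_a)]$ and $\widetilde\Delta_{-1}(\mathbf d)=\mathbb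 E[\cosh(\lambda(d_b-1))-\cosh(\lambda d_b)]$, the expectations being over the sampling of $u,v$ and the signing. *)

theory Defs
  imports Complex_Main
begin

definition simple_graph :: "'a set \<Rightarrow> 'a set set \<Rightarrow> bool" where
  "simple_graph V E \<longleftrightarrow> finite V \<and>
     (\<forall>e\<in>E. \<exists>u v. u \<in> V \<and> v \<in> V \<and> u \<noteq> v \<and> e = {u, v})"

definition deg :: "'a set set \<Rightarrow> 'a \<Rightarrow> nat" where
  "deg E v = card {e \<in> E. v \<in> e}"

definition vol :: "'a set set \<Rightarrow> 'a set \<Rightarrow> nat" where
  "vol E S = (\<Sum>v\<in>S. deg E v)"

definition cut_size :: "'a set set \<Rightarrow> 'a set \<Rightarrow> nat" where
  "cut_size E S = card {e \<in> E. e \<inter> S \<noteq> {} \<and> e - S \<noteq> {}}"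

definition expander :: "real \<Rightarrow> 'a set \<Rightarrow> 'a set set \<Rightarrow> bool" where
  "expander \<alpha> V E \<longleftrightarrow>
     (\<forall>S. S \<subseteq> V \<longrightarrow> real (cut_size E S) \<ge> \<alpha> * real (min (vol E S) (vol E (V - S))))"

definition Phi :: "'a set \<Rightarrow> real \<Rightarrow> ('a \<Rightarrow> int) \<Rightarrow> real" where
  "Phi V lam d = (\<Sum>v\<in>V. cosh (lam * real_of_int (d v)))"

definition fminus :: "real \<Rightarrow> int \<Rightarrow> real" where
  "fminus lam x = cosh (lam * real_of_int (x - 1)) - cosh (lam * real_of_int x)"

definition fplus :: "real \<Rightarrow> int \<Rightarrow> real" where
  "fplus lam x = cosh (lam * real_of_int (x + 1)) - cosh (lam * real_of_int x)"

text \<open>For an arriving edge e, the endpoint i has the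
  larger discrepancy (value Max (d ` e)), the other endpoint j the smaller one
  (value Min (d ` e)); ties are irrelevant for these quantities.\<close>
definition Delta_minus :: "'a set set \<Rightarrow> real \<Rightarrow> ('a \<Rightarrow> int) \<Rightarrow> real" where
  "Delta_minus E lam d = (\<Sum>e\<in>E. fminus lam (Max (d ` e))) / real (card E)"

definition Delta_plus :: "'a set set \<Rightarrow> real \<Rightarrow> ('a \<Rightarrow> int) \<Rightarrow> real" where
  "Delta_plus E lam d = (\<Sum>e\<in>E. fplus lam (Min (d ` e))) / real (card E)"

definition greedy_step :: "('a \<Rightarrow> int) \<Rightarrow> 'a set \<Rightarrow> ('a \<Rightarrow> int)" where
  "greedy_step d e =
     (let i = (SOME i. i \<in> e \<and> (\<forall>k\<in>e. d k \<le> d i));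
          j = (SOME j. j \<in> e \<and> j \<noteq> i)
      in d(i := d i - 1, j := d j + 1))"

definition expected_greedy_change ::
  "'a set \<Rightarrow> 'a set set \<Rightarrow> real \<Rightarrow> ('a \<Rightarrow> int) \<Rightarrow> real" where
  "expected_greedy_change V E lam d =
     (\<Sum>e\<in>E. Phi V lam (greedy_step d e) - Phi V lam d) / real (card E)"

text \<open>(1+beta)-process with weights w on V: u, v independent with probability
  w x / (sum of w); with probability 1-beta the signing is uniform
  (a = u, b = v or a = v, b = u, each with probability 1/2); with probability
  beta it is greedy (b = endpoint of larger discrepancy, a = the other, so
  d_b = max, d_a = min).  a receives +1, b receives -1.\<close>
definition tDelta_plus ::
  "'a set \<Rightarrow> ('a \<Rightarrow> real) \<Rightarrow> real \<Rightarrow> real \<Rightarrow> ('a \<Rightarrow> int) \<Rightarrow> real" where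
  "tDelta_plus V w \<beta> lam d =
     (let W = (\<Sum>y\<in>V. w y) in
      \<Sum>u\<in>V. \<Sum>v\<in>V. (w u / W) * (w v / W) *
        ((1 - \<beta>) * (fplus lam (d u) / 2 + fplus lam (d v) / 2)
         + \<beta> * fplus lam (min (d u) (d v))))"

definition tDelta_minus ::
  "'a set \<Rightarrow> ('a \<Rightarrow> real) \<Rightarrow> real \<Rightarrow> real \<Rightarrow> ('a \<Rightarrow> int) \<Rightarrow> real" where
  "tDelta_minus V w \<beta> lam d =
     (let W = (\<Sum>y\<in>V. w y) in
      \<Sum>u\<in>V. \<Sum>v\<in>V. (w u / W) * (w v / W) *
        ((1 - \<beta>) * (fminus lam (d v) / 2 + fminus lam (d u) / 2)
         + \<beta> * fminus lam (max (d u) (d v))))"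

end

theory Submission imports Defs "HOL-Analysis.Analysis" begin

(* Both inequalities instantiate one estimate valid for every g : V -> R: the mean over the
   edges of the smaller endpoint value of g is at most the expectation of
   (1 - alpha) (g u + g v)/2 + alpha min (g u) (g v) for u, v drawn independently with
   probability proportional to degree.  As min a b = (a + b - |a - b|)/2, the linear parts agree
   by double counting, and what remains is the Poincare-type inequality
     alpha * sum_{u,v} deg u deg v |g u - g v|  <=  4 |E| * sum_{ij in E} |g i - g j|.
   Writing |x - y| as the length of the interval between x and y and integrating over the
   threshold t, it suffices that for S = {g > t} the weight 2 vol S vol (V - S) of the pairs
   separated by S is at most 4 |E| |E(S, V - S)| / alpha, which is expansion together with
   vol S + vol (V - S) = 2 |E|.
   Since x -> cosh (lam (x + 1)) - cosh (lam x) increases and x -> cosh (lam (x - 1)) - cosh (lam x)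
   decreases, both greedy updates take the minimum of these functions over the arriving edge. *)

lemma simple_graph_finite_edges: "simple_graph V E \<Longrightarrow> finite E"
  unfolding simple_graph_def by (rule finite_subset[of _ "Pow V"]) auto

lemma simple_graph_edgeE:
  assumes "simple_graph V E" "e \<in> E"
  obtains i j where "i \<in> V" "j \<in> V" "i \<noteq> j" "e = {i, j}"
  using assms unfolding simple_graph_def by blast

lemma sum_edges_sum_endpoints:
  fixes g :: "'a \<Rightarrow> real"
  assumes sg: "simple_graph V E"
  shows "(\<Sum>e\<in>E. \<Sum>v\<in>e. g v) = (\<Sum>v\<in>V. real (deg E v) * g v)"
proof -
  have fV: "finite V" using sg by (simp add: simple_graph_def)
  have "(\<Sum>e\<in>E. \<Sum>v\<in>e. g v) = (\<Sum>e\<in>E. \<Sum>v\<in>V. if v \<in> e then g v else 0)"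
  proof (rule sum.cong[OF refl])
    fix e assume "e \<in> E"
    then have "V \<inter> e = e" by (auto elim: simple_graph_edgeE[OF sg])
    then show "(\<Sum>v\<in>e. g v) = (\<Sum>v\<in>V. if v \<in> e then g v else 0)"
      using fV by (simp add: sum.If_cases)
  qed
  also have "\<dots> = (\<Sum>v\<in>V. \<Sum>e\<in>E. if v \<in> e then g v else 0)"
    by (rule sum.swap)
  also have "\<dots> = (\<Sum>v\<in>V. real (deg E v) * g v)"
    using simple_graph_finite_edges[OF sg]
    by (simp add: sum.If_cases deg_def Int_def conj_commute)
  finally show ?thesis .
qed

lemma sum_deg_eq_twice_card:
  assumes sg: "simple_graph V E"
  shows "(\<Sum>v\<in>V. real (deg E v)) = 2 * real (card E)"
proof -
  have "(\<Sum>v\<in>V. real (deg E v)) = (\<Sum>e\<in>E. \<Sum>v\<in>e. (1::real))"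
    using sum_edges_sum_endpoints[OF sg, of "\<lambda>_. 1"] by simp
  also have "\<dots> = (\<Sum>e\<in>E. 2)"
    by (rule sum.cong[OF refl]) (auto elim: simple_graph_edgeE[OF sg])
  finally show ?thesis by simp
qed

lemma vol_add_vol_Diff:
  assumes sg: "simple_graph V E" and "S \<subseteq> V"
  shows "real (vol E S) + real (vol E (V - S)) = 2 * real (card E)"
proof -
  have "finite V" using sg by (simp add: simple_graph_def)
  then have "(\<Sum>v\<in>V. real (deg E v)) = (\<Sum>v\<in>S. real (deg E v)) + (\<Sum>v\<in>V - S. real (deg E v))"
    using \<open>S \<subseteq> V\<close> by (metis add.commute sum.subset_diff)
  then show ?thesis using sum_deg_eq_twice_card[OF sg] by (simp add: vol_def)
qed

lemma mult_le_add_mult_min: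
  fixes a b :: real
  assumes "0 \<le> a" "0 \<le> b"
  shows "a * b \<le> (a + b) * min a b"
  using assms by (cases "a \<le> b") (simp_all add: min_def algebra_simps)

lemma expander_vol_mult_le_cut_size:
  assumes sg: "simple_graph V E" and exp: "expander \<alpha> V E" and "S \<subseteq> V"
  shows "\<alpha> * (real (vol E S) * real (vol E (V - S))) \<le> 2 * real (card E) * real (cut_size E S)"
proof (cases "\<alpha> \<le> 0")
  case True
  then show ?thesis by (intro order.trans[OF mult_nonpos_nonneg]) auto
next
  case False
  let ?a = "real (vol E S)" and ?b = "real (vol E (V - S))"
  have "\<alpha> * (?a * ?b) \<le> \<alpha> * ((?a + ?b) * min ?a ?b)"
    using False by (intro mult_left_mono mult_le_add_mult_min) auto
  also have "\<dots> = 2 * real (card E) * (\<alpha> * min ?a ?b)"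
    using vol_add_vol_Diff[OF sg \<open>S \<subseteq> V\<close>] by simp
  also have "\<dots> \<le> 2 * real (card E) * real (cut_size E S)"
    using exp \<open>S \<subseteq> V\<close> unfolding expander_def by (intro mult_left_mono) auto
  finally show ?thesis .
qed

lemma indicator_Min_Max_threshold:
  fixes g :: "'a \<Rightarrow> real"
  assumes "finite e" "e \<noteq> {}"
  shows "indicator {Min (g ` e)..<Max (g ` e)} t
    = of_bool (e \<inter> {v. t < g v} \<noteq> {} \<and> e - {v. t < g v} \<noteq> {})"
  using assms by (auto simp: indicator_def Min_le_iff Max_gr_iff not_less)

lemma sum_edges_indicator_eq_cut_size:
  fixes g :: "'a \<Rightarrow> real"
  assumes sg: "simple_graph V E"
  shows "(\<Sum>e\<in>E. indicator {Min (g ` e)..<Max (g ` e)} t) = real (cut_size E {v\<in>V. t < g v})"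
proof -
  have "(indicator {Min (g ` e)..<Max (g ` e)} t :: real)
      = of_bool (e \<inter> {v\<in>V. t < g v} \<noteq> {} \<and> e - {v\<in>V. t < g v} \<noteq> {})" if "e \<in> E" for e
  proof -
    have "finite e" "e \<noteq> {}" "e \<subseteq> V" using that by (auto elim!: simple_graph_edgeE[OF sg])
    then show ?thesis by (auto simp: indicator_Min_Max_threshold)
  qed
  then have "(\<Sum>e\<in>E. indicator {Min (g ` e)..<Max (g ` e)} t :: real)
      = (\<Sum>e\<in>E. of_bool (e \<inter> {v\<in>V. t < g v} \<noteq> {} \<and> e - {v\<in>V. t < g v} \<noteq> {}))"
    by (rule sum.cong[OF refl])
  then show ?thesis
    using simple_graph_finite_edges[OF sg] by (simp add: cut_size_def Int_def)
qed

lemma sum_pairs_separated: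
  fixes w :: "'a \<Rightarrow> real"
  assumes "finite V" "S \<subseteq> V"
  shows "(\<Sum>u\<in>V. \<Sum>v\<in>V. w u * w v * of_bool ((u \<in> S) \<noteq> (v \<in> S))) = 2 * sum w S * sum w (V - S)"
proof -
  have inner: "(\<Sum>v\<in>V. w u * w v * of_bool ((u \<in> S) \<noteq> (v \<in> S)))
      = w u * (if u \<in> S then sum w (V - S) else sum w S)" for u
  proof -
    have "V \<inter> {v. v \<notin> S} = V - S" "V \<inter> {v. v \<in> S} = S" using assms by auto
    then show ?thesis using assms by (simp add: sum_distrib_left[symmetric] mult.assoc)
  qed
  have "(\<Sum>u\<in>V. \<Sum>v\<in>V. w u * w v * of_bool ((u \<in> S) \<noteq> (v \<in> S)))
      = (\<Sum>u\<in>V. w u * (if u \<in> S then sum w (V - S) else sum w S))"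
    by (rule sum.cong[OF refl]) (rule inner)
  also have "\<dots> = sum w S * sum w (V - S) + sum w (V - S) * sum w S"
  proof -
    have "V \<inter> S = S" "V \<inter> - S = V - S" using assms by auto
    then show ?thesis
      using assms by (simp add: if_distrib sum.If_cases sum_distrib_right[symmetric])
  qed
  finally show ?thesis by simp
qed

lemma expander_threshold_inequality:
  fixes g :: "'a \<Rightarrow> real"
  assumes sg: "simple_graph V E" and exp: "expander \<alpha> V E"
  shows "\<alpha> * (\<Sum>u\<in>V. \<Sum>v\<in>V. real (deg E u) * real (deg E v) * indicator {min (g u) (g v)..<max (g u) (g v)} t)
    \<le> 4 * real (card E) * (\<Sum>e\<in>E. indicator {Min (g ` e)..<Max (g ` e)} t)"
proof -
  define S where "S = {v\<in>V. t < g v}"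
  have "S \<subseteq> V" by (auto simp: S_def)
  have "finite V" using sg by (simp add: simple_graph_def)
  have "indicator {min (g u) (g v)..<max (g u) (g v)} t = (of_bool ((u \<in> S) \<noteq> (v \<in> S)) :: real)"
    if "u \<in> V" "v \<in> V" for u v
    using that by (auto simp: S_def indicator_def min_def max_def)
  then have "(\<Sum>u\<in>V. \<Sum>v\<in>V. real (deg E u) * real (deg E v) * indicator {min (g u) (g v)..<max (g u) (g v)} t)
      = 2 * (real (vol E S) * real (vol E (V - S)))"
    using sum_pairs_separated[OF \<open>finite V\<close> \<open>S \<subseteq> V\<close>, of "\<lambda>v. real (deg E v)"]
    by (simp add: vol_def)
  then show ?thesis
    using expander_vol_mult_le_cut_size[OF sg exp \<open>S \<subseteq> V\<close>]
    by (simp add: sum_edges_indicator_eq_cut_size[OF sg] S_def)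
qed

lemma integrable_indicator_atLeastLessThan:
  "integrable lborel (indicator {a..<b} :: real \<Rightarrow> real)"
  by (cases "a \<le> b") (auto intro: integrable_real_indicator)

lemma abs_diff_eq_integral_indicator:
  fixes x y :: real
  shows "\<bar>x - y\<bar> = integral\<^sup>L lborel (indicator {min x y..<max x y})"
  by (simp add: min_def max_def)

lemma expander_pair_spread_le_edge_spread:
  fixes g :: "'a \<Rightarrow> real"
  assumes sg: "simple_graph V E" and exp: "expander \<alpha> V E"
  shows "\<alpha> * (\<Sum>u\<in>V. \<Sum>v\<in>V. real (deg E u) * real (deg E v) * \<bar>g u - g v\<bar>)
    \<le> 4 * real (card E) * (\<Sum>e\<in>E. Max (g ` e) - Min (g ` e))"
proof -
  have edge_spread: "Max (g ` e) - Min (g ` e) = integral\<^sup>L lborel (indicator {Min (g ` e)..<Max (g ` e)})"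
    if "e \<in> E" for e
    using that by (elim simple_graph_edgeE[OF sg]) simp
  have "\<alpha> * (\<Sum>u\<in>V. \<Sum>v\<in>V. real (deg E u) * real (deg E v) * \<bar>g u - g v\<bar>)
      = (LINT t|lborel. \<alpha> * (\<Sum>u\<in>V. \<Sum>v\<in>V. real (deg E u) * real (deg E v)
          * indicator {min (g u) (g v)..<max (g u) (g v)} t))"
    by (simp add: abs_diff_eq_integral_indicator integrable_indicator_atLeastLessThan)
  also have "\<dots> \<le> (LINT t|lborel. 4 * real (card E) * (\<Sum>e\<in>E. indicator {Min (g ` e)..<Max (g ` e)} t))"
    by (intro integral_mono expander_threshold_inequality[OF sg exp])
      (simp_all add: integrable_indicator_atLeastLessThan)
  also have "\<dots> = 4 * real (card E) * (\<Sum>e\<in>E. Max (g ` e) - Min (g ` e))"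
    by (simp add: edge_spread integrable_indicator_atLeastLessThan)
  finally show ?thesis .
qed

lemma sum_pairs_mult_add:
  fixes w f :: "'a \<Rightarrow> real"
  shows "(\<Sum>u\<in>V. \<Sum>v\<in>V. w u * w v * (f u + f v)) = 2 * sum w V * (\<Sum>v\<in>V. w v * f v)"
proof -
  have "(\<Sum>u\<in>V. \<Sum>v\<in>V. w u * w v * (f u + f v))
      = (\<Sum>u\<in>V. \<Sum>v\<in>V. (w u * f u) * w v) + (\<Sum>u\<in>V. \<Sum>v\<in>V. w u * (w v * f v))"
    by (simp add: sum.distrib algebra_simps)
  also have "\<dots> = (\<Sum>u\<in>V. w u * f u) * sum w V + sum w V * (\<Sum>v\<in>V. w v * f v)"
    by (simp add: sum_product)
  finally show ?thesis by simp
qed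

lemma expander_mean_edge_Min_le:
  fixes g :: "'a \<Rightarrow> real"
  assumes sg: "simple_graph V E" and "E \<noteq> {}" and exp: "expander \<alpha> V E"
  defines "W \<equiv> \<Sum>y\<in>V. real (deg E y)"
  shows "(\<Sum>e\<in>E. Min (g ` e)) / real (card E)
    \<le> (\<Sum>u\<in>V. \<Sum>v\<in>V. (real (deg E u) / W) * (real (deg E v) / W)
          * ((1 - \<alpha>) * (g u / 2 + g v / 2) + \<alpha> * min (g u) (g v)))"
    (is "?lhs \<le> ?rhs")
proof -
  define X where "X = (\<Sum>v\<in>V. real (deg E v) * g v)"
  define D where "D = (\<Sum>e\<in>E. Max (g ` e) - Min (g ` e))"
  define A where "A = (\<Sum>u\<in>V. \<Sum>v\<in>V. real (deg E u) * real (deg E v) * \<bar>g u - g v\<bar>)"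
  have W: "W = 2 * real (card E)"
    unfolding W_def by (rule sum_deg_eq_twice_card[OF sg])
  have "real (card E) > 0"
    using \<open>E \<noteq> {}\<close> simple_graph_finite_edges[OF sg] by (simp add: card_gt_0_iff)
  then have "W > 0" using W by simp
  have "2 * Min (g ` e) = (\<Sum>v\<in>e. g v) - (Max (g ` e) - Min (g ` e))" if "e \<in> E" for e
    using that by (elim simple_graph_edgeE[OF sg]) (simp add: min_def max_def)
  then have "2 * (\<Sum>e\<in>E. Min (g ` e)) = X - D"
    by (simp add: sum_distrib_left sum_subtractf X_def D_def sum_edges_sum_endpoints[OF sg, symmetric])
  then have lhs: "?lhs = X / W - D / W"
    using W \<open>real (card E) > 0\<close> by (simp add: field_simps)
  have "(real (deg E u) / W) * (real (deg E v) / W) * ((1 - \<alpha>) * (g u / 2 + g v / 2) + \<alpha> * min (g u) (g v))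
      = (real (deg E u) * real (deg E v) * (g u + g v) / 2
         - \<alpha> / 2 * (real (deg E u) * real (deg E v) * \<bar>g u - g v\<bar>)) / W\<^sup>2" for u v
    using \<open>W > 0\<close> by (simp add: min_def field_simps power2_eq_square)
  then have "?rhs = ((\<Sum>u\<in>V. \<Sum>v\<in>V. real (deg E u) * real (deg E v) * (g u + g v)) / 2 - \<alpha> / 2 * A) / W\<^sup>2"
    by (simp add: A_def sum_divide_distrib[symmetric] sum_subtractf sum_distrib_left)
  also have "\<dots> = (2 * W * X / 2 - \<alpha> / 2 * A) / W\<^sup>2"
    using sum_pairs_mult_add[of "\<lambda>v. real (deg E v)" g V] by (simp add: X_def W_def)
  also have "\<dots> = X / W - \<alpha> * A / (2 * W\<^sup>2)"
    using \<open>W > 0\<close> by (simp add: field_simps power2_eq_square)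
  finally have rhs: "?rhs = X / W - \<alpha> * A / (2 * W\<^sup>2)" .
  have "\<alpha> * A \<le> 2 * W * D"
    using expander_pair_spread_le_edge_spread[OF sg exp, of g] W by (simp add: A_def D_def)
  then have "\<alpha> * A / (2 * W\<^sup>2) \<le> D / W"
    using \<open>W > 0\<close> by (simp add: field_simps power2_eq_square)
  then show ?thesis unfolding lhs rhs by simp
qed

lemma cosh_add_diff_mono:
  fixes c s t :: real
  assumes "0 \<le> c" "s \<le> t"
  shows "cosh (s + c) - cosh s \<le> cosh (t + c) - cosh t"
proof -
  have diff: "cosh (x + c) - cosh x = (exp x * (exp c - 1) + exp (- x) * (exp (- c) - 1)) / 2" for x :: real
  proof -
    have "exp (- (x + c)) = exp (- x) * exp (- c)" by (simp add: exp_add[symmetric])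
    then show ?thesis by (simp add: cosh_def exp_add field_simps)
  qed
  have "exp s * (exp c - 1) \<le> exp t * (exp c - 1)"
    using assms by (intro mult_right_mono) auto
  moreover have "exp (- s) * (exp (- c) - 1) \<le> exp (- t) * (exp (- c) - 1)"
    using assms by (intro mult_right_mono_neg) auto
  ultimately show ?thesis unfolding diff by simp
qed

lemma mono_fplus:
  assumes "0 \<le> lam"
  shows "mono (fplus lam)"
proof (rule monoI)
  fix x y :: int
  assume "x \<le> y"
  then have "lam * x \<le> lam * y"
    using assms by (simp add: mult_left_mono)
  then show "fplus lam x \<le> fplus lam y"
    using cosh_add_diff_mono[OF assms] by (simp add: fplus_def distrib_left)
qed

lemma fminus_eq_fplus_uminus: "fminus lam x = fplus lam (- x)"
proof -
  have "lam * real_of_int (x - 1) = - (lam * real_of_int (- x + 1))"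
    by (simp add: algebra_simps)
  then show ?thesis
    unfolding fminus_def fplus_def by (metis cosh_minus mult_minus_right of_int_minus)
qed

lemma antimono_fminus: "0 \<le> lam \<Longrightarrow> antimono (fminus lam)"
  by (rule antimonoI) (simp add: fminus_eq_fplus_uminus monoD[OF mono_fplus])

lemma antimono_Max_commute:
  assumes "antimono f" "finite A" "A \<noteq> {}"
  shows "f (Max A) = Min (f ` A)"
  by (rule Min_eqI[symmetric]) (use assms in \<open>auto intro: antimonoD\<close>)

lemma Delta_plus_le_tDelta_plus:
  assumes sg: "simple_graph V E" and "E \<noteq> {}" and exp: "expander \<alpha> V E" and "0 \<le> lam"
  shows "Delta_plus E lam d \<le> tDelta_plus V (\<lambda>v. real (deg E v)) \<alpha> lam d"
proof -
  have "fplus lam (Min (d ` e)) = Min ((\<lambda>v. fplus lam (d v)) ` e)" if "e \<in> E" for e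
  proof -
    have "finite e" "e \<noteq> {}" using that by (auto elim!: simple_graph_edgeE[OF sg])
    then show ?thesis
      using mono_Min_commute[OF mono_fplus[OF \<open>0 \<le> lam\<close>], of "d ` e"] by (simp add: image_image)
  qed
  then have "Delta_plus E lam d = (\<Sum>e\<in>E. Min ((\<lambda>v. fplus lam (d v)) ` e)) / real (card E)"
    by (simp add: Delta_plus_def)
  also have "\<dots> \<le> tDelta_plus V (\<lambda>v. real (deg E v)) \<alpha> lam d"
    using expander_mean_edge_Min_le[OF sg \<open>E \<noteq> {}\<close> exp, of "\<lambda>v. fplus lam (d v)"]
    by (simp add: tDelta_plus_def Let_def min_of_mono[OF mono_fplus[OF \<open>0 \<le> lam\<close>]])
  finally show ?thesis .
qed

lemma Delta_minus_le_tDelta_minus: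
  assumes sg: "simple_graph V E" and "E \<noteq> {}" and exp: "expander \<alpha> V E" and "0 \<le> lam"
  shows "Delta_minus E lam d \<le> tDelta_minus V (\<lambda>v. real (deg E v)) \<alpha> lam d"
proof -
  have "fminus lam (Max (d ` e)) = Min ((\<lambda>v. fminus lam (d v)) ` e)" if "e \<in> E" for e
  proof -
    have "finite e" "e \<noteq> {}" using that by (auto elim!: simple_graph_edgeE[OF sg])
    then show ?thesis
      using antimono_Max_commute[OF antimono_fminus[OF \<open>0 \<le> lam\<close>], of "d ` e"] by (simp add: image_image)
  qed
  then have "Delta_minus E lam d = (\<Sum>e\<in>E. Min ((\<lambda>v. fminus lam (d v)) ` e)) / real (card E)"
    by (simp add: Delta_minus_def)
  also have "\<dots> \<le> tDelta_minus V (\<lambda>v. real (deg E v)) \<alpha> lam d"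
    using expander_mean_edge_Min_le[OF sg \<open>E \<noteq> {}\<close> exp, of "\<lambda>v. fminus lam (d v)"]
    unfolding tDelta_minus_def Let_def min_of_antimono[OF antimono_fminus[OF \<open>0 \<le> lam\<close>]]
    by (simp only: add.commute)
  finally show ?thesis .
qed

lemma Phi_move_unit:
  assumes "finite V" "i \<in> V" "j \<in> V" "i \<noteq> j"
  shows "Phi V lam (d(i := d i - 1, j := d j + 1)) - Phi V lam d = fminus lam (d i) + fplus lam (d j)"
proof -
  have "Phi V lam (d(i := d i - 1, j := d j + 1)) - Phi V lam d
      = (\<Sum>v\<in>V. (if v = i then fminus lam (d i) else 0) + (if v = j then fplus lam (d j) else 0))"
    unfolding Phi_def sum_subtractf[symmetric]
    by (rule sum.cong[OF refl]) (use assms in \<open>auto simp: fminus_def fplus_def\<close>)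
  also have "\<dots> = fminus lam (d i) + fplus lam (d j)"
    using assms by (simp add: sum.distrib)
  finally show ?thesis .
qed

lemma Phi_greedy_step:
  assumes sg: "simple_graph V E" and "e \<in> E"
  shows "Phi V lam (greedy_step d e) - Phi V lam d = fminus lam (Max (d ` e)) + fplus lam (Min (d ` e))"
proof -
  obtain x y where xy: "x \<in> V" "y \<in> V" "x \<noteq> y" "e = {x, y}"
    using simple_graph_edgeE[OF sg \<open>e \<in> E\<close>] .
  define i where "i = (SOME i. i \<in> e \<and> (\<forall>k\<in>e. d k \<le> d i))"
  define j where "j = (SOME j. j \<in> e \<and> j \<noteq> i)"
  have "\<exists>i. i \<in> e \<and> (\<forall>k\<in>e. d k \<le> d i)"
    using xy by (cases "d y \<le> d x") auto
  then have i: "i \<in> e \<and> (\<forall>k\<in>e. d k \<le> d i)"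
    unfolding i_def by (rule someI_ex)
  have "\<exists>j. j \<in> e \<and> j \<noteq> i"
    using xy i by auto
  then have j: "j \<in> e \<and> j \<noteq> i"
    unfolding j_def by (rule someI_ex)
  have "e = {i, j}" "i \<in> V" "j \<in> V" "i \<noteq> j" "d j \<le> d i"
    using xy i j by auto
  then have "Max (d ` e) = d i" "Min (d ` e) = d j"
    by (simp_all add: max_def min_def)
  moreover have "greedy_step d e = d(i := d i - 1, j := d j + 1)"
    unfolding greedy_step_def Let_def i_def[symmetric] j_def[symmetric] ..
  moreover have "finite V"
    using sg by (simp add: simple_graph_def)
  ultimately show ?thesis
    using Phi_move_unit \<open>i \<in> V\<close> \<open>j \<in> V\<close> \<open>i \<noteq> j\<close> by simp
qed

lemma expected_greedy_change_eq_Delta: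
  assumes "simple_graph V E"
  shows "expected_greedy_change V E lam d = Delta_minus E lam d + Delta_plus E lam d"
  unfolding expected_greedy_change_def Delta_minus_def Delta_plus_def
  by (simp add: Phi_greedy_step[OF assms] sum.distrib add_divide_distrib)

theorem mainTheorem3:
  fixes V :: "'a set" and E :: "'a set set" and \<alpha> lam :: real and d :: "'a \<Rightarrow> int"
  assumes "simple_graph V E"
    and "E \<noteq> {}"
    and "\<alpha> > 0"
    and "expander \<alpha> V E"
    and "0 < lam" and "lam < 1"
  shows "Delta_minus E lam d \<le> tDelta_minus V (\<lambda>v. real (deg E v)) \<alpha> lam d
     \<and> Delta_plus E lam d \<le> tDelta_plus V (\<lambda>v. real (deg E v)) \<alpha> lam d
     \<and> expected_greedy_change V E lam d
           \<le> tDelta_minus V (\<lambda>v. real (deg E v)) \<alpha> lam d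
             + tDelta_plus V (\<lambda>v. real (deg E v)) \<alpha> lam d"
proof -
  have minus: "Delta_minus E lam d \<le> tDelta_minus V (\<lambda>v. real (deg E v)) \<alpha> lam d"
    using assms by (intro Delta_minus_le_tDelta_minus) auto
  have plus: "Delta_plus E lam d \<le> tDelta_plus V (\<lambda>v. real (deg E v)) \<alpha> lam d"
    using assms by (intro Delta_plus_le_tDelta_plus) auto
  show ?thesis
    using minus plus expected_greedy_change_eq_Delta[OF \<open>simple_graph V E\<close>] by simp
qed

end
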